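(* Let the branching factor satisfy $b>1$, let $\ell^*$ be the peak of the single-peaked sequence $\{\lambda_i\}$ and $\gamma>1$ a constant with $\sum_{j\ge i}\lambda_j\le\gamma\lambda_i$ for all $i\ge\ell^*+2$. Then for every $i$ with $\ell^*+1\le i\le h$, $x_i\le\gamma\,(h-i)$.
   Context: Galton–Watson branching process on an infinite $d$-ary tree (root at level $0$) with offspring distribution $D=\{c_j\}_{j=0}^d$, branching factor $b=\sum_j jc_j$; each non-root node independently holds an answer with probability $1/n$. Let $t(x)=\sum_jc_jx^j(1-\frac1n)^j$, $\phi_0=1$, $\phi_i=t(\phi_{i-1})$, $\lambda_i=\phi_{i-1}-\phi_i$. For $b>1$ the sequence $\{\lambda_i\}$ is single-peaked: there is a level $\ell^*$ with $\lambda_{i-1}\le\lambda_i$ for $i\le\ell^*$ and $\lambda_j>\lambda_{j+1}$ for $j\ge\ell^*$, and there is a constant $\gamma>1$ (independent of $n$) with $\sum_{j\ge i}\lambda_j\le\gamma\lambda_i$ for all $i\ge\ell^*+2$. For a level $h$, define $x_h=0$ and for $i\le h-1$, $x_i=\max_{i+1\le j\le h}\{x_j+\frac{j-i}{\lambda_{i+1}}\sum_{\ell=i+1}^h\lambda_\ell\}$ (the direct referral rewards of the DR mechanism). *)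

theory Defs
  imports Complex_Main
begin

text \<open>Offspring distribution c_0..c_d, answer probability 1/n.\<close>

definition gw_t :: "(nat \<Rightarrow> real) \<Rightarrow> nat \<Rightarrow> nat \<Rightarrow> real \<Rightarrow> real" where
  "gw_t c d n x = (\<Sum>j\<le>d. c j * x ^ j * (1 - 1 / real n) ^ j)"

primrec gw_phi :: "(nat \<Rightarrow> real) \<Rightarrow> nat \<Rightarrow> nat \<Rightarrow> nat \<Rightarrow> real" where
  "gw_phi c d n 0 = 1"
| "gw_phi c d n (Suc i) = gw_t c d n (gw_phi c d n i)"

text \<open>lambda_i = phi_(i-1) - phi_i, meaningful for i >= 1.\<close>
definition gw_lambda :: "(nat \<Rightarrow> real) \<Rightarrow> nat \<Rightarrow> nat \<Rightarrow> nat \<Rightarrow> real" where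
  "gw_lambda c d n i = gw_phi c d n (i - 1) - gw_phi c d n i"

definition branching :: "(nat \<Rightarrow> real) \<Rightarrow> nat \<Rightarrow> real" where
  "branching c d = (\<Sum>j\<le>d. real j * c j)"

text \<open>Auxiliary: dr_aux lam h k is the DR reward x at level h - k (for k \<le> h),
  computed by recursion on the distance k to level h.
  x_h = 0;  x_i = max_{i+1\<le>j\<le>h} (x_j + (j-i)/lam(i+1) * sum_{l=i+1}^h lam l).
  With i = h - Suc k, the index j = h - k' ranges over k' \<in> {..k}.\<close>
fun dr_aux :: "(nat \<Rightarrow> real) \<Rightarrow> nat \<Rightarrow> nat \<Rightarrow> real" where
  "dr_aux lam h 0 = 0"
| "dr_aux lam h (Suc k) =
     Max ((\<lambda>k'. dr_aux lam h k' + real (Suc k - k') / lam (h - k) * (\<Sum>l\<in>{h - k..h}. lam l)) ` {..k})"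

definition dr_reward :: "(nat \<Rightarrow> real) \<Rightarrow> nat \<Rightarrow> nat \<Rightarrow> real" where
  "dr_reward lam h i = dr_aux lam h (h - i)"

end

theory Submission
  imports Defs
begin

text \<open>In the recursion for x_i each candidate adds (j - i) times the ratio
  (\<Sum>l=i+1..h. lam l) / lam (i+1). Past the peak, lam (i+1) > 0 and this finite
  tail is bounded by the infinite tail, hence the ratio is at most \<gamma>, and induction
  on h - i gives x_i \<le> \<gamma> (h - i). The infinite tails exist because lam telescopes
  along the decreasing sequence phi in [0, 1].\<close>

lemma dr_aux_le_linear:
  assumes "k \<le> h"
    and ratio: "\<And>m. h - k < m \<Longrightarrow> m \<le> h \<Longrightarrow> (\<Sum>l\<in>{m..h}. lam l) / lam m \<le> \<gamma>"
  shows "dr_aux lam h k \<le> \<gamma> * real k"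
  using assms
proof (induction k rule: less_induct)
  case (less k)
  show ?case
  proof (cases k)
    case 0
    then show ?thesis by simp
  next
    case (Suc k0)
    have r: "(\<Sum>l\<in>{h - k0..h}. lam l) / lam (h - k0) \<le> \<gamma>"
      using less.prems Suc by (intro less.prems(2)) auto
    have "dr_aux lam h k' + real (Suc k0 - k') / lam (h - k0) * (\<Sum>l\<in>{h - k0..h}. lam l)
          \<le> \<gamma> * real (Suc k0)" if "k' \<le> k0" for k'
    proof -
      have ih: "dr_aux lam h k' \<le> \<gamma> * real k'"
        using less.IH[of k'] less.prems that Suc by auto
      have "real (Suc k0 - k') / lam (h - k0) * (\<Sum>l\<in>{h - k0..h}. lam l)
            = real (Suc k0 - k') * ((\<Sum>l\<in>{h - k0..h}. lam l) / lam (h - k0))"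
        by simp
      also have "\<dots> \<le> real (Suc k0 - k') * \<gamma>"
        by (rule mult_left_mono[OF r]) simp
      also have "\<dots> = \<gamma> * real (Suc k0) - \<gamma> * real k'"
        using that by (simp add: of_nat_diff algebra_simps)
      finally show ?thesis using ih by linarith
    qed
    then show ?thesis using Suc by (simp add: Max_le_iff)
  qed
qed

lemma sum_atLeastAtMost_le_suminf_shift:
  fixes f :: "nat \<Rightarrow> real"
  assumes "summable f" "\<And>j. 0 \<le> f j"
  shows "(\<Sum>l\<in>{m..h}. f l) \<le> (\<Sum>j. f (m + j))"
proof -
  have "(\<Sum>l\<in>{m..h}. f l) \<le> (\<Sum>l\<in>(+) m ` {..<Suc h}. f l)"
  proof (rule sum_mono2)
    show "{m..h} \<subseteq> (+) m ` {..<Suc h}"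
    proof
      fix l assume "l \<in> {m..h}"
      then have "l = m + (l - m)" "l - m \<in> {..<Suc h}" by auto
      then show "l \<in> (+) m ` {..<Suc h}" by blast
    qed
  qed (auto simp: assms(2))
  also have "\<dots> = (\<Sum>j<Suc h. f (m + j))"
    by (subst sum.reindex) auto
  also have "\<dots> \<le> (\<Sum>j. f (m + j))"
    using assms by (intro sum_le_suminf) (auto simp: add.commute[of m] summable_iff_shift)
  finally show ?thesis .
qed

lemma gw_lambda_Suc_sum: "(\<Sum>j<m. gw_lambda c d n (Suc j)) = 1 - gw_phi c d n m"
  by (induction m) (simp_all add: gw_lambda_def)

context
  fixes c :: "nat \<Rightarrow> real" and d n :: nat
  assumes c_nonneg: "\<forall>j\<le>d. c j \<ge> 0"
    and c_sum: "(\<Sum>j\<le>d. c j) = 1"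
    and n_pos: "n \<ge> 1"
begin

lemma gw_t_nonneg: "0 \<le> x \<Longrightarrow> 0 \<le> gw_t c d n x"
  using c_nonneg n_pos unfolding gw_t_def by (auto intro!: sum_nonneg simp: field_simps)

lemma gw_t_mono: "0 \<le> x \<Longrightarrow> x \<le> y \<Longrightarrow> gw_t c d n x \<le> gw_t c d n y"
proof -
  have "0 \<le> 1 - 1 / real n" using n_pos by (simp add: field_simps)
  then show "0 \<le> x \<Longrightarrow> x \<le> y \<Longrightarrow> gw_t c d n x \<le> gw_t c d n y"
    using c_nonneg unfolding gw_t_def
    by (intro sum_mono) (auto intro!: mult_right_mono mult_left_mono power_mono)
qed

lemma gw_t_one_le: "gw_t c d n 1 \<le> 1"
proof -
  have "0 \<le> 1 - 1 / real n" "1 - 1 / real n \<le> 1"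
    using n_pos by (simp_all add: field_simps)
  then have "gw_t c d n 1 \<le> (\<Sum>j\<le>d. c j)"
    using c_nonneg unfolding gw_t_def by (intro sum_mono) (auto intro!: mult_left_le power_le_one)
  then show ?thesis using c_sum by simp
qed

lemma gw_phi_Suc_bounds: "0 \<le> gw_phi c d n (Suc i) \<and> gw_phi c d n (Suc i) \<le> gw_phi c d n i"
  by (induction i) (simp_all add: gw_t_one_le gw_t_nonneg gw_t_mono)

lemma gw_phi_nonneg: "0 \<le> gw_phi c d n i"
  using gw_phi_Suc_bounds[of "i - 1"] by (cases i) auto

lemma gw_lambda_nonneg: "0 \<le> gw_lambda c d n i"
  using gw_phi_Suc_bounds[of "i - 1"] by (cases i) (auto simp: gw_lambda_def)

lemma summable_gw_lambda: "summable (gw_lambda c d n)"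
proof -
  have "summable (\<lambda>j. gw_lambda c d n (Suc j))"
  proof (rule summableI_nonneg_bounded)
    show "(\<Sum>j<m. gw_lambda c d n (Suc j)) \<le> 1" for m
      using gw_phi_nonneg[of m] by (simp add: gw_lambda_Suc_sum)
  qed (rule gw_lambda_nonneg)
  then show ?thesis by (simp add: summable_Suc_iff)
qed

end

theorem proposition5p3:
  fixes c :: "nat \<Rightarrow> real" and d n :: nat and lstar h i :: nat and \<gamma> :: real
  defines "lam \<equiv> gw_lambda c d n"
  assumes c_nonneg: "\<forall>j\<le>d. c j \<ge> 0"
    and c_sum: "(\<Sum>j\<le>d. c j) = 1"
    and n_pos: "n \<ge> 1"
    and b_gt1: "branching c d > 1"
    and lstar_pos: "lstar \<ge> 1"
    and peak_up: "\<forall>i. 2 \<le> i \<and> i \<le> lstar \<longrightarrow> lam (i - 1) \<le> lam i"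
    and peak_down: "\<forall>j\<ge>lstar. lam j > lam (j + 1)"
    and gamma_gt1: "\<gamma> > 1"
    and tail: "\<forall>k\<ge>lstar + 2. (\<Sum>j. lam (k + j)) \<le> \<gamma> * lam k"
    and i_range: "lstar + 1 \<le> i" "i \<le> h"
  shows "dr_reward lam h i \<le> \<gamma> * real (h - i)"
proof -
  note lam_nonneg = gw_lambda_nonneg[OF c_nonneg c_sum n_pos, folded lam_def]
  have "(\<Sum>l\<in>{m..h}. lam l) / lam m \<le> \<gamma>" if "i < m" for m
  proof -
    have "lam m > lam (m + 1)"
      using peak_down that i_range by simp
    then have "lam m > 0"
      using lam_nonneg[of "m + 1"] by linarith
    moreover have "(\<Sum>l\<in>{m..h}. lam l) \<le> (\<Sum>j. lam (m + j))"
      using summable_gw_lambda[OF c_nonneg c_sum n_pos] lam_nonneg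
      by (intro sum_atLeastAtMost_le_suminf_shift) (simp_all add: lam_def)
    moreover have "(\<Sum>j. lam (m + j)) \<le> \<gamma> * lam m"
      using tail that i_range by simp
    ultimately show ?thesis by (simp add: divide_le_eq)
  qed
  then show ?thesis
    unfolding dr_reward_def using i_range by (intro dr_aux_le_linear) auto
qed

end
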